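(* Every signed digraph $G$ on $[n]$ ($n\geq 1$) admits a nilpotent function $f:\{0,1,2\}^n\to\{0,1,2\}^n$ of class at most $\lfloor\log_2 n\rfloor+2$.
   Context: A signed digraph is a digraph (loops allowed, no multiple arcs) in which each arc is labeled positive, negative, or null (unsigned). For a finite interval of integers $A$, a function over $A$ is a map $f:A^n\to A^n$; $f^0=\mathrm{id}$, $f^k=f\circ f^{k-1}$. The interaction graph $G(f)$ is the signed digraph on $[n]$ with an arc $(j,i)$ iff $f_i(a)\neq f_i(b)$ for some $a,b\in A^n$ with $a_j<b_j$ and $a_\ell=b_\ell$ for $\ell\neq j$; the arc is positive if $f_i(a)\leq f_i(b)$ for all such pairs, negative if $f_i(a)\geq f_i(b)$ for all such pairs, and null otherwise. $G$ admits $f$ if $G(f)=G$. $f$ is nilpotent if $f^k$ is constant for some $k\geq 0$; the least such $k$ is its class. *)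

theory Defs
  imports Complex_Main
begin

text \<open>Vertices of the digraph are 0,...,n-1 (standing for [n] = {1..n}).
  Configurations in A^n with A = {0..<q} are represented as functions nat => nat
  that take values in {0..<q} on the indices < n and are 0 elsewhere.\<close>

datatype sign = Pos | Neg | Null

text \<open>A signed digraph on n vertices: G j i = None means no arc (j,i);
  G j i = Some s means an arc (j,i) with sign s. Loops allowed, no multiple arcs.\<close>
type_synonym sdigraph = "nat \<Rightarrow> nat \<Rightarrow> sign option"

definition sdigraph_on :: "nat \<Rightarrow> sdigraph \<Rightarrow> bool" where
  "sdigraph_on n G \<longleftrightarrow> (\<forall>j i. (j \<ge> n \<or> i \<ge> n) \<longrightarrow> G j i = None)"

definition configs :: "nat \<Rightarrow> nat \<Rightarrow> (nat \<Rightarrow> nat) set" where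
  "configs q n = {x. (\<forall>i<n. x i < q) \<and> (\<forall>i\<ge>n. x i = 0)}"

definition is_fun_over :: "nat \<Rightarrow> nat \<Rightarrow> ((nat \<Rightarrow> nat) \<Rightarrow> (nat \<Rightarrow> nat)) \<Rightarrow> bool" where
  "is_fun_over q n f \<longleftrightarrow> (\<forall>x \<in> configs q n. f x \<in> configs q n)"

definition jpairs :: "nat \<Rightarrow> nat \<Rightarrow> nat \<Rightarrow> ((nat \<Rightarrow> nat) \<times> (nat \<Rightarrow> nat)) set" where
  "jpairs q n j = {(a, b). a \<in> configs q n \<and> b \<in> configs q n \<and> a j < b j
                           \<and> (\<forall>l. l \<noteq> j \<longrightarrow> a l = b l)}"

definition interaction_graph ::
  "nat \<Rightarrow> nat \<Rightarrow> ((nat \<Rightarrow> nat) \<Rightarrow> (nat \<Rightarrow> nat)) \<Rightarrow> sdigraph" where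
  "interaction_graph q n f j i =
     (if j < n \<and> i < n \<and> (\<exists>(a, b) \<in> jpairs q n j. f a i \<noteq> f b i) then
        Some (if (\<forall>(a, b) \<in> jpairs q n j. f a i \<le> f b i) then Pos
              else if (\<forall>(a, b) \<in> jpairs q n j. f a i \<ge> f b i) then Neg
              else Null)
      else None)"

definition admits :: "nat \<Rightarrow> nat \<Rightarrow> sdigraph \<Rightarrow> ((nat \<Rightarrow> nat) \<Rightarrow> (nat \<Rightarrow> nat)) \<Rightarrow> bool" where
  "admits q n G f \<longleftrightarrow> interaction_graph q n f = G"

definition const_iter :: "nat \<Rightarrow> nat \<Rightarrow> ((nat \<Rightarrow> nat) \<Rightarrow> (nat \<Rightarrow> nat)) \<Rightarrow> nat \<Rightarrow> bool" where
  "const_iter q n f k \<longleftrightarrow> (\<exists>c. \<forall>x \<in> configs q n. (f ^^ k) x = c)"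

definition nilpotent :: "nat \<Rightarrow> nat \<Rightarrow> ((nat \<Rightarrow> nat) \<Rightarrow> (nat \<Rightarrow> nat)) \<Rightarrow> bool" where
  "nilpotent q n f \<longleftrightarrow> (\<exists>k. const_iter q n f k)"

definition nil_class :: "nat \<Rightarrow> nat \<Rightarrow> ((nat \<Rightarrow> nat) \<Rightarrow> (nat \<Rightarrow> nat)) \<Rightarrow> nat" where
  "nil_class q n f = (LEAST k. const_iter q n f k)"

end

theory Submission imports Defs begin

text \<open>Give every vertex i with an in-arc a parent p(i) among its in-neighbours. The coordinate
  f_i takes only the value 0 and an active value in {1,2}; the remaining idle value of i is never
  produced. Whenever x_{p(i)} is idle, f_i is a gate testing the other in-neighbours of i against
  values chosen so that each of these arcs gets its sign; otherwise f_i reacts to x_{p(i)} so that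
  the parent arc gets its sign. Hence G(f) = G, and from the first step on f_i depends on x_{p(i)}
  alone, which by then lies in {0, active(p(i))}.

  If f_i is constant on these two values, i is settled after two steps; otherwise i repeats its
  parent with a delay of one step. The active value of a vertex is chosen so that a child of
  largest subtree among those with a null parent arc settles. Then a vertex repeating a parent
  that itself repeats its parent has a sibling with at least as large a subtree, so subtree
  sizes at least double along such chains, which therefore have length at most log2 n.\<close>

lemma configs_fun_upd: "a \<in> configs q n \<Longrightarrow> j < n \<Longrightarrow> w < q \<Longrightarrow> a(j := w) \<in> configs q n"
  by (auto simp: configs_def)

lemma fun_upd_in_jpairs:
  "a \<in> configs q n \<Longrightarrow> j < n \<Longrightarrow> v < w \<Longrightarrow> w < q \<Longrightarrow> (a(j := v), a(j := w)) \<in> jpairs q n j"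
  by (auto simp: jpairs_def configs_fun_upd)

lemma jpairsD:
  assumes "(a, b) \<in> jpairs q n j"
  shows "a \<in> configs q n" "a j < b j" "b j < q" "b = a(j := b j)"
proof -
  show "a \<in> configs q n" "a j < b j" using assms by (auto simp: jpairs_def)
  show "b j < q" using assms by (cases "j < n") (auto simp: jpairs_def configs_def)
  show "b = a(j := b j)" using assms by (auto simp: jpairs_def)
qed

text \<open>Every pair in jpairs q n j is (a(j:=v), a(j:=w)) with v < w, so the sign of an arc
  (j, i) is read off the sections v \<mapsto> f (a(j := v)) i.\<close>

lemma jpairs_from_sections:
  assumes "\<And>a v w. a \<in> configs q n \<Longrightarrow> v < w \<Longrightarrow> w < q \<Longrightarrow> P (f (a(j := v)) i) (f (a(j := w)) i)"
  shows "\<forall>(a, b) \<in> jpairs q n j. P (f a i) (f b i)"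
proof clarify
  fix a b assume ab: "(a, b) \<in> jpairs q n j"
  have "P (f (a(j := a j)) i) (f (a(j := b j)) i)"
    using assms jpairsD(1-3)[OF ab] by blast
  then show "P (f a i) (f b i)" using jpairsD(4)[OF ab] by simp
qed

lemma interaction_graph_Some:
  assumes "j < n" "i < n" "(a, b) \<in> jpairs q n j" "f a i \<noteq> f b i"
  shows "interaction_graph q n f j i =
    Some (if \<forall>(a, b) \<in> jpairs q n j. f a i \<le> f b i then Pos
          else if \<forall>(a, b) \<in> jpairs q n j. f a i \<ge> f b i then Neg else Null)"
proof -
  have "\<exists>(a, b) \<in> jpairs q n j. f a i \<noteq> f b i" using assms(3,4) by blast
  then show ?thesis using assms(1,2) unfolding interaction_graph_def by presburger
qed

lemma interaction_graph_None:
  "(\<And>a b. (a, b) \<in> jpairs q n j \<Longrightarrow> f a i = f b i) \<Longrightarrow> interaction_graph q n f j i = None"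
  by (auto simp: interaction_graph_def)

lemma interaction_graph_Pos:
  assumes "j < n" "i < n"
    and mono: "\<And>a v w. a \<in> configs q n \<Longrightarrow> v < w \<Longrightarrow> w < q \<Longrightarrow> f (a(j := v)) i \<le> f (a(j := w)) i"
    and "a \<in> configs q n" "v < w" "w < q" "f (a(j := v)) i < f (a(j := w)) i"
  shows "interaction_graph q n f j i = Some Pos"
proof -
  have "(a(j := v), a(j := w)) \<in> jpairs q n j" using assms by (intro fun_upd_in_jpairs)
  moreover have "\<forall>(a, b) \<in> jpairs q n j. f a i \<le> f b i" using mono by (rule jpairs_from_sections)
  ultimately show ?thesis using interaction_graph_Some[OF assms(1,2)] assms(7) by simp
qed

lemma interaction_graph_Neg:
  assumes "j < n" "i < n"
    and antimono: "\<And>a v w. a \<in> configs q n \<Longrightarrow> v < w \<Longrightarrow> w < q \<Longrightarrow> f (a(j := v)) i \<ge> f (a(j := w)) i"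
    and "a \<in> configs q n" "v < w" "w < q" "f (a(j := v)) i > f (a(j := w)) i"
  shows "interaction_graph q n f j i = Some Neg"
proof -
  have pair: "(a(j := v), a(j := w)) \<in> jpairs q n j" using assms by (intro fun_upd_in_jpairs)
  moreover have "\<forall>(a, b) \<in> jpairs q n j. f a i \<ge> f b i" using antimono by (rule jpairs_from_sections)
  moreover have "\<not> (\<forall>(a, b) \<in> jpairs q n j. f a i \<le> f b i)" using pair assms(7) by fastforce
  ultimately show ?thesis using interaction_graph_Some[OF assms(1,2) pair] assms(7) by simp
qed

lemma interaction_graph_Null:
  assumes "j < n" "i < n"
    and "a \<in> configs q n" "v < w" "w < q" "f (a(j := v)) i < f (a(j := w)) i"
    and "a' \<in> configs q n" "v' < w'" "w' < q" "f (a'(j := v')) i > f (a'(j := w')) i"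
  shows "interaction_graph q n f j i = Some Null"
proof -
  have up: "(a(j := v), a(j := w)) \<in> jpairs q n j"
    and down: "(a'(j := v'), a'(j := w')) \<in> jpairs q n j"
    using assms by (auto intro: fun_upd_in_jpairs)
  have "\<not> (\<forall>(a, b) \<in> jpairs q n j. f a i \<le> f b i)" using down assms(10) by fastforce
  moreover have "\<not> (\<forall>(a, b) \<in> jpairs q n j. f a i \<ge> f b i)" using up assms(6) by fastforce
  ultimately show ?thesis using interaction_graph_Some[OF assms(1,2) up] assms(6) by simp
qed

lemma funpow_cycle_predecessor_unique:
  fixes g :: "'a \<Rightarrow> 'a"
  assumes "g ((g ^^ a) x) = x" "g ((g ^^ b) x) = x"
  shows "(g ^^ a) x = (g ^^ b) x"
proof -
  have *: "(g ^^ a) x = (g ^^ b) x" if "a \<le> b" "g ((g ^^ a) x) = x" "g ((g ^^ b) x) = x" for a b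
  proof -
    have "(g ^^ (b - a)) x = (g ^^ (b - a)) ((g ^^ Suc a) x)" using that(2) by simp
    also have "\<dots> = (g ^^ (b - a + Suc a)) x" by (simp only: funpow_add o_apply)
    also have "\<dots> = x" using that(1,3) by (simp add: Suc_diff_le)
    finally have cycle: "(g ^^ (b - a)) x = x" .
    have "(g ^^ b) x = (g ^^ (a + (b - a))) x" using that(1) by simp
    also have "\<dots> = (g ^^ a) x" by (simp only: funpow_add o_apply cycle)
    finally show ?thesis by simp
  qed
  show ?thesis using *[of a b] *[of b a] assms nat_le_linear by metis
qed

text \<open>A side in-neighbour k of i opens the gate of i exactly at the value sign_value s, where s
  is the sign of (k, i): the indicator of that value on {0,1,2} has sign s.\<close>

definition sign_value :: "sign \<Rightarrow> nat" where
  "sign_value s = (case s of Pos \<Rightarrow> 2 | Neg \<Rightarrow> 0 | Null \<Rightarrow> 1)"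

lemma sign_value_less_3: "sign_value s < 3"
  by (cases s) (auto simp: sign_value_def)

locale nilpotent_realisation =
  fixes n :: nat and G :: sdigraph
  assumes sdigraph_on: "sdigraph_on n G"
begin

lemma arc_vertices: "G j i \<noteq> None \<Longrightarrow> j < n \<and> i < n"
  using sdigraph_on unfolding sdigraph_on_def by (metis not_le)

definition has_in_arc :: "nat \<Rightarrow> bool" where
  "has_in_arc i \<longleftrightarrow> (\<exists>j. G j i \<noteq> None)"

definition parent :: "nat \<Rightarrow> nat" where
  "parent i = (if i < n \<and> has_in_arc i then (LEAST j. G j i \<noteq> None) else n)"

definition descendants :: "nat \<Rightarrow> nat set" where
  "descendants v = {u. u < n \<and> (\<exists>m. (parent ^^ m) u = v)}"

definition subtree_size :: "nat \<Rightarrow> nat" where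
  "subtree_size v = card (descendants v)"

definition children :: "nat \<Rightarrow> nat set" where
  "children j = {i. i < n \<and> has_in_arc i \<and> parent i = j}"

definition null_parent_arc :: "nat \<Rightarrow> bool" where
  "null_parent_arc i \<longleftrightarrow> G (parent i) i = Some Null"

definition heavy_child_null :: "nat \<Rightarrow> bool" where
  "heavy_child_null j \<longleftrightarrow>
     (\<exists>c\<in>children j. null_parent_arc c \<and> (\<forall>d\<in>children j. subtree_size d \<le> subtree_size c))"

definition idle_value :: "nat \<Rightarrow> nat" where
  "idle_value j = (if heavy_child_null j then 1 else 2)"

definition active_value :: "nat \<Rightarrow> nat" where
  "active_value j = (if heavy_child_null j then 2 else 1)"

definition side_in_nbrs :: "nat \<Rightarrow> nat set" where
  "side_in_nbrs i = {k. G k i \<noteq> None \<and> k \<noteq> parent i}"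

definition gate_default :: "nat \<Rightarrow> bool" where
  "gate_default i \<longleftrightarrow> heavy_child_null (parent i) \<or> G (parent i) i = Some Pos"

definition gate :: "nat \<Rightarrow> (nat \<Rightarrow> nat) \<Rightarrow> bool" where
  "gate i x \<longleftrightarrow>
     (if side_in_nbrs i = {} then gate_default i
      else \<forall>k\<in>side_in_nbrs i. x k = sign_value (the (G k i)))"

text \<open>With a = active_value i and g the gate, the rule on the parent's values 0, 1, 2 is
  Pos (0,g,a), Neg (a,g,0), Null (0,g,0) if the parent has a heavy null child (idle value 1), and
  Pos (0,0,g), Neg (a,a,g), Null (0,a,g) otherwise (idle value 2). With g = gate_default i each
  realises the sign of the parent arc, and on the non-idle values {0, active} of the parent it is
  constant exactly when null_parent_arc i agrees with heavy_child_null (parent i).\<close>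

definition parent_response :: "nat \<Rightarrow> nat \<Rightarrow> bool" where
  "parent_response i v \<longleftrightarrow>
     (if heavy_child_null (parent i)
      then G (parent i) i = Some Pos \<and> v = 2 \<or> G (parent i) i = Some Neg \<and> v = 0
      else G (parent i) i = Some Neg \<or> G (parent i) i = Some Null \<and> v = 1)"

definition local_rule :: "nat \<Rightarrow> nat \<Rightarrow> bool \<Rightarrow> nat" where
  "local_rule i v g =
     (if (if v = idle_value (parent i) then g else parent_response i v) then active_value i else 0)"

definition F :: "(nat \<Rightarrow> nat) \<Rightarrow> nat \<Rightarrow> nat" where
  "F x i = (if i < n \<and> has_in_arc i then local_rule i (x (parent i)) (gate i x) else 0)"

lemma parent_arc: "i < n \<Longrightarrow> has_in_arc i \<Longrightarrow> G (parent i) i \<noteq> None"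
  using LeastI_ex[of "\<lambda>j. G j i \<noteq> None"] unfolding parent_def has_in_arc_def by auto

lemma parent_less: "i < n \<Longrightarrow> has_in_arc i \<Longrightarrow> parent i < n"
  using parent_arc arc_vertices by blast

lemma side_in_nbrs_less: "k \<in> side_in_nbrs i \<Longrightarrow> k < n"
  using arc_vertices by (auto simp: side_in_nbrs_def)

lemma parent_notin_side_in_nbrs: "parent i \<notin> side_in_nbrs i"
  by (auto simp: side_in_nbrs_def)

lemma F_outside: "\<not> (i < n \<and> has_in_arc i) \<Longrightarrow> F x i = 0"
  unfolding F_def by auto

lemma F_zero_or_active: "F x i = 0 \<or> F x i = active_value i"
  unfolding F_def local_rule_def by (auto split: if_split)

lemma F_neq_idle: "F x j \<noteq> idle_value j"
  using F_zero_or_active[of x j] by (auto simp: idle_value_def active_value_def)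

lemma F_in_configs: "F x \<in> configs 3 n"
proof -
  have "F x i < 3" for i
    using F_zero_or_active[of x i] by (auto simp: active_value_def)
  then show ?thesis using F_outside by (auto simp: configs_def)
qed

subsection \<open>The interaction graph\<close>

lemma F_depends_on_in_nbrs:
  assumes "\<And>k. G k i \<noteq> None \<Longrightarrow> x k = y k"
  shows "F x i = F y i"
proof (cases "i < n \<and> has_in_arc i")
  case True
  have "x (parent i) = y (parent i)" using assms parent_arc True by blast
  moreover have "\<forall>k\<in>side_in_nbrs i. x k = y k" using assms by (auto simp: side_in_nbrs_def)
  then have "gate i x = gate i y" by (simp add: gate_def)
  ultimately show ?thesis by (simp add: F_def)
qed (simp add: F_outside)

lemma gate_fun_upd_parent: "gate i (x(parent i := v)) = gate i x"
  using parent_notin_side_in_nbrs by (auto simp: gate_def)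

lemma gate_fun_upd_side:
  assumes "j \<in> side_in_nbrs i"
  shows "gate i (x(j := w)) \<longleftrightarrow> w = sign_value (the (G j i)) \<and> gate i (x(j := sign_value (the (G j i))))"
  using assms unfolding gate_def by (auto split: if_splits)

lemma gate_default_attained: "\<exists>x\<in>configs 3 n. gate i x = gate_default i"
proof (cases "side_in_nbrs i = {}")
  case True
  then show ?thesis by (intro bexI[of _ "\<lambda>_. 0"]) (auto simp: gate_def configs_def)
next
  case False
  then obtain k where k: "k \<in> side_in_nbrs i" by blast
  define shift :: nat where "shift = (if gate_default i then 0 else 1)"
  define x where "x k' = (if k' \<in> side_in_nbrs i then (sign_value (the (G k' i)) + shift) mod 3 else 0)" for k'
  have "x \<in> configs 3 n"
    using side_in_nbrs_less by (fastforce simp: configs_def x_def)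
  moreover have "gate i x = gate_default i"
  proof (cases "gate_default i")
    case False
    have "x k \<noteq> sign_value (the (G k i))"
      using k False sign_value_less_3[of "the (G k i)"] by (auto simp: x_def shift_def mod_Suc)
    then show ?thesis using k False by (auto simp: gate_def)
  qed (use sign_value_less_3 in \<open>auto simp: gate_def x_def shift_def\<close>)
  ultimately show ?thesis by blast
qed

lemma three_values: "v < w \<Longrightarrow> w < (3::nat) \<Longrightarrow> v = 0 \<and> w = 1 \<or> v = 0 \<and> w = 2 \<or> v = 1 \<and> w = 2"
  by arith

lemma local_rule_mono:
  "G (parent i) i = Some Pos \<Longrightarrow> v < w \<Longrightarrow> w < 3 \<Longrightarrow> local_rule i v g \<le> local_rule i w g"
  using three_values[of v w] by (auto simp: local_rule_def idle_value_def parent_response_def)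

lemma local_rule_antimono:
  "G (parent i) i = Some Neg \<Longrightarrow> v < w \<Longrightarrow> w < 3 \<Longrightarrow> local_rule i v g \<ge> local_rule i w g"
  using three_values[of v w] by (auto simp: local_rule_def idle_value_def parent_response_def)

lemma local_rule_mono_gate: "local_rule i v False \<le> local_rule i v g"
  by (simp add: local_rule_def)

lemma local_rule_idle: "local_rule i (idle_value (parent i)) g = (if g then active_value i else 0)"
  by (simp add: local_rule_def)

lemma local_rule_gate_default:
  "G (parent i) i = Some Pos \<Longrightarrow> local_rule i 0 (gate_default i) < local_rule i 2 (gate_default i)"
  "G (parent i) i = Some Neg \<Longrightarrow> local_rule i 0 (gate_default i) > local_rule i 2 (gate_default i)"
  "G (parent i) i = Some Null \<Longrightarrow>
     local_rule i 0 (gate_default i) < local_rule i 1 (gate_default i) \<and>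
     local_rule i 1 (gate_default i) > local_rule i 2 (gate_default i)"
  by (cases "heavy_child_null (parent i)";
      simp add: local_rule_def idle_value_def active_value_def parent_response_def gate_default_def)+

lemma interaction_graph_parent_arc:
  assumes i: "i < n" "has_in_arc i"
  shows "interaction_graph 3 n F (parent i) i = G (parent i) i"
proof -
  let ?p = "parent i" and ?g = "gate_default i"
  have p: "?p < n" using parent_less[OF i] .
  have along_parent: "F (a(?p := v)) i = local_rule i v (gate i a)" for a v
    using i by (simp add: F_def gate_fun_upd_parent)
  obtain x where x: "x \<in> configs 3 n" "gate i x = ?g" using gate_default_attained by blast
  obtain s where s: "G ?p i = Some s" using parent_arc[OF i] by blast
  show ?thesis
  proof (cases s)
    case Pos
    then show ?thesis
      using interaction_graph_Pos[OF p i(1) _ x(1), where v=0 and w=2] local_rule_mono local_rule_gate_default(1) s x(2)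
      by (simp add: along_parent)
  next
    case Neg
    then show ?thesis
      using interaction_graph_Neg[OF p i(1) _ x(1), where v=0 and w=2] local_rule_antimono local_rule_gate_default(2) s x(2)
      by (simp add: along_parent)
  next
    case Null
    then show ?thesis
      using interaction_graph_Null[OF p i(1) x(1) _ _ _ x(1), where v=0 and w=1 and v'=1 and w'=2] local_rule_gate_default(3) s x(2)
      by (simp add: along_parent)
  qed
qed

lemma interaction_graph_side_arc:
  assumes i: "i < n" and j: "j \<in> side_in_nbrs i"
  shows "interaction_graph 3 n F j i = G j i"
proof -
  let ?p = "parent i"
  have hin: "has_in_arc i" using j by (auto simp: side_in_nbrs_def has_in_arc_def)
  have jn: "j < n" and jp: "j \<noteq> ?p" using side_in_nbrs_less j parent_notin_side_in_nbrs by auto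
  have p: "?p < n" using parent_less[OF i hin] .
  obtain s where s: "G j i = Some s" using j by (auto simp: side_in_nbrs_def)
  let ?L = "sign_value s"
  have along_side: "F (a(j := v)) i = local_rule i (a ?p) (v = ?L \<and> gate i (a(j := ?L)))" for a v
    using i hin jp gate_fun_upd_side[OF j, of a v] s by (simp add: F_def)
  define x where "x k = (if k = ?p then idle_value ?p else if k \<in> side_in_nbrs i then sign_value (the (G k i)) else 0)" for k
  have x: "x \<in> configs 3 n"
    using p side_in_nbrs_less sign_value_less_3 by (fastforce simp: configs_def x_def idle_value_def)
  have "gate i (x(j := ?L))"
    using j s parent_notin_side_in_nbrs by (auto simp: gate_def x_def)
  then have witness: "F (x(j := v)) i = (if v = ?L then active_value i else 0)" for v
    by (simp add: along_side local_rule_idle x_def)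
  have active: "0 < active_value i" by (simp add: active_value_def)
  show ?thesis
  proof (cases s)
    case Pos
    then have L: "?L = 2" by (simp add: sign_value_def)
    have "F (a(j := v)) i \<le> F (a(j := w)) i" if "v < w" "w < 3" for a v w
      using that L local_rule_mono_gate by (simp add: along_side)
    then show ?thesis
      using interaction_graph_Pos[OF jn i _ x, where v=0 and w=2] L s Pos active by (simp add: witness)
  next
    case Neg
    then have L: "?L = 0" by (simp add: sign_value_def)
    have "F (a(j := v)) i \<ge> F (a(j := w)) i" if "v < w" "w < 3" for a v w
      using that L local_rule_mono_gate by (simp add: along_side)
    then show ?thesis
      using interaction_graph_Neg[OF jn i _ x, where v=0 and w=2] L s Neg active by (simp add: witness)
  next
    case Null
    then have "?L = 1" by (simp add: sign_value_def)
    then show ?thesis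
      using interaction_graph_Null[OF jn i x _ _ _ x, where v=0 and w=1 and v'=1 and w'=2] s Null active
      by (simp add: witness)
  qed
qed

lemma interaction_graph_F: "interaction_graph 3 n F = G"
proof (intro ext)
  fix j i
  show "interaction_graph 3 n F j i = G j i"
  proof (cases "G j i")
    case None
    have "F a i = F b i" if ab: "(a, b) \<in> jpairs 3 n j" for a b
    proof (rule F_depends_on_in_nbrs)
      fix k assume "G k i \<noteq> None"
      with None have "k \<noteq> j" by auto
      with ab show "a k = b k" by (auto simp: jpairs_def)
    qed
    then show ?thesis using None interaction_graph_None by metis
  next
    case (Some s)
    then have "i < n" "has_in_arc i" "j = parent i \<or> j \<in> side_in_nbrs i"
      using arc_vertices by (auto simp: has_in_arc_def side_in_nbrs_def)
    then show ?thesis using interaction_graph_parent_arc interaction_graph_side_arc by blast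
  qed
qed

subsection \<open>Settling times\<close>

definition settled :: "nat \<Rightarrow> nat \<Rightarrow> bool" where
  "settled i T \<longleftrightarrow> (\<forall>x y. (F ^^ T) x i = (F ^^ T) y i)"

lemma settled_mono:
  assumes "settled i T" "T \<le> T'"
  shows "settled i T'"
proof -
  obtain d where "T' = T + d" using assms(2) le_Suc_ex by blast
  then have "(F ^^ T') x = (F ^^ T) ((F ^^ d) x)" for x by (simp add: funpow_add)
  then show ?thesis using assms(1) unfolding settled_def by simp
qed

lemma settled_without_in_arc: "\<not> (i < n \<and> has_in_arc i) \<Longrightarrow> settled i 1"
  by (simp add: settled_def F_outside)

lemma F_of_non_idle:
  assumes "\<And>j. y j \<noteq> idle_value j" "i < n" "has_in_arc i"
  shows "F y i = (if parent_response i (y (parent i)) then active_value i else 0)"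
  using assms by (simp add: F_def local_rule_def)

lemma F_iterate_from_parent:
  assumes "i < n" "has_in_arc i"
  shows "(F ^^ Suc (Suc T)) x i =
    (if parent_response i ((F ^^ Suc T) x (parent i)) then active_value i else 0)"
  using F_of_non_idle[OF F_neq_idle assms] by simp

lemma settled_after_parent:
  "i < n \<Longrightarrow> has_in_arc i \<Longrightarrow> settled (parent i) (Suc T) \<Longrightarrow> settled i (Suc (Suc T))"
  unfolding settled_def by (simp only: F_iterate_from_parent) metis

lemma parent_response_constant:
  assumes "i < n" "has_in_arc i" "null_parent_arc i = heavy_child_null (parent i)"
  shows "parent_response i 0 = parent_response i (active_value (parent i))"
proof -
  obtain s where s: "G (parent i) i = Some s" using parent_arc assms(1,2) by blast
  then show ?thesis using assms(3)
    by (cases s; cases "heavy_child_null (parent i)")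
       (simp_all add: parent_response_def active_value_def null_parent_arc_def)
qed

lemma settled_2:
  assumes "i < n" "has_in_arc i" "null_parent_arc i = heavy_child_null (parent i)"
  shows "settled i 2"
proof -
  have "(F ^^ 2) x i = (if parent_response i 0 then active_value i else 0)" for x
    using F_iterate_from_parent[OF assms(1,2), of 0 x] F_zero_or_active[of x "parent i"]
      parent_response_constant[OF assms] by (auto simp: numeral_2_eq_2)
  then show ?thesis by (simp add: settled_def)
qed

definition follows_parent :: "nat \<Rightarrow> bool" where
  "follows_parent i \<longleftrightarrow> i < n \<and> has_in_arc i \<and> null_parent_arc i \<noteq> heavy_child_null (parent i)"

lemma settled_2_unless_follows_parent: "i < n \<Longrightarrow> \<not> follows_parent i \<Longrightarrow> settled i 2"
  using settled_2 settled_without_in_arc settled_mono unfolding follows_parent_def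
  by (metis one_le_numeral)

subsection \<open>Subtrees of the parent forest\<close>

lemma descendants_subset: "descendants v \<subseteq> {..<n}"
  by (auto simp: descendants_def)

lemma finite_descendants: "finite (descendants v)"
  using descendants_subset finite_subset by blast

lemma subtree_size_le: "subtree_size v \<le> n"
  unfolding subtree_size_def using card_mono[OF _ descendants_subset] by fastforce

lemma self_in_descendants: "v < n \<Longrightarrow> v \<in> descendants v"
  unfolding descendants_def by (auto intro: exI[of _ 0])

lemma subtree_size_pos: "v < n \<Longrightarrow> 0 < subtree_size v"
  using self_in_descendants finite_descendants card_gt_0_iff unfolding subtree_size_def by blast

lemma descendants_ancestor: "(parent ^^ m) v = w \<Longrightarrow> descendants v \<subseteq> descendants w"
  unfolding descendants_def by (auto intro: exI[of _ "m + _"] simp: funpow_add)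

lemma descendants_child: "i \<in> children j \<Longrightarrow> descendants i \<subseteq> descendants j"
  using descendants_ancestor[of 1 i j] by (auto simp: children_def)

lemma larger_sibling:
  assumes "i \<in> children j" "null_parent_arc i \<noteq> heavy_child_null j"
  shows "\<exists>d\<in>children j. d \<noteq> i \<and> subtree_size i \<le> subtree_size d"
proof (cases "null_parent_arc i")
  case True
  then show ?thesis
    using assms unfolding heavy_child_null_def by (metis nat_le_linear)
next
  case False
  then obtain c where "c \<in> children j" "null_parent_arc c"
    "\<forall>d\<in>children j. subtree_size d \<le> subtree_size c"
    using assms unfolding heavy_child_null_def by blast
  moreover have "c \<noteq> i" using calculation(2) False by blast
  ultimately show ?thesis using assms(1) by blast
qed


definition on_parent_cycle :: "nat \<Rightarrow> bool" where
  "on_parent_cycle j \<longleftrightarrow> (\<exists>m. (parent ^^ m) (parent j) = j)"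

lemma on_parent_cycle_if_reaches_child:
  assumes "c \<in> children j" "(parent ^^ m) j = c"
  shows "on_parent_cycle j"
proof -
  have "(parent ^^ Suc m) j = j" using assms by (auto simp: children_def)
  then show ?thesis unfolding on_parent_cycle_def by (metis funpow_Suc_right o_apply)
qed

lemma follower_not_on_parent_cycle:
  assumes "follows_parent i"
  shows "\<not> on_parent_cycle i"
proof
  assume "on_parent_cycle i"
  then obtain m where m: "(parent ^^ m) (parent i) = i" by (auto simp: on_parent_cycle_def)
  let ?j = "parent i"
  have i: "i < n" "i \<in> children ?j" using assms by (auto simp: follows_parent_def children_def)
  obtain d where d: "d \<in> children ?j" "d \<noteq> i" "subtree_size i \<le> subtree_size d"
    using larger_sibling[OF i(2)] assms by (auto simp: follows_parent_def)
  have "descendants d \<subseteq> descendants i"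
    using descendants_child[OF d(1)] descendants_ancestor[OF m] by blast
  moreover have "i \<notin> descendants d"
  proof
    assume "i \<in> descendants d"
    then obtain b where b: "(parent ^^ b) i = d" by (auto simp: descendants_def)
    then obtain b' where "b = Suc b'" using d(2) by (cases b) auto
    then have "(parent ^^ b') ?j = d" using b by (simp add: funpow_Suc_right del: funpow.simps)
    then have "d = i"
      using funpow_cycle_predecessor_unique[of parent b' ?j m] m d(1) by (auto simp: children_def)
    then show False using d(2) by simp
  qed
  ultimately have "insert i (descendants d) \<subseteq> descendants i" using self_in_descendants[OF i(1)] by blast
  then have "subtree_size d + 1 \<le> subtree_size i"
    using \<open>i \<notin> descendants d\<close> finite_descendants card_mono unfolding subtree_size_def
    by (metis Suc_eq_plus1 card_insert_disjoint)
  then show False using d(3) by simp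
qed

lemma sibling_descendants_disjoint:
  assumes "\<not> on_parent_cycle j" "i \<in> children j" "d \<in> children j" "i \<noteq> d"
  shows "descendants i \<inter> descendants d = {}"
proof -
  have no_path: False if "c \<in> children j" "c' \<in> children j" "c \<noteq> c'"
      "(parent ^^ a) u = c" "(parent ^^ b) u = c'" "a \<le> b" for c c' u a b
  proof -
    have "(parent ^^ (b - a)) c = c'" using that(4-6) by (metis funpow_add le_add_diff_inverse2 o_apply)
    moreover have "b - a \<noteq> 0" using calculation that(3) by auto
    ultimately obtain k where "(parent ^^ Suc k) c = c'" by (metis not0_implies_Suc)
    then have "(parent ^^ k) j = c'" using that(1) by (simp add: funpow_Suc_right children_def del: funpow.simps)
    then show False using on_parent_cycle_if_reaches_child[OF that(2)] assms(1) by blast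
  qed
  show ?thesis
  proof (rule ccontr)
    assume "descendants i \<inter> descendants d \<noteq> {}"
    then obtain u a b where "(parent ^^ a) u = i" "(parent ^^ b) u = d" by (auto simp: descendants_def)
    then show False using no_path assms(2-4) by (metis nat_le_linear)
  qed
qed

lemma sibling_subtree_sizes:
  assumes "\<not> on_parent_cycle j" "i \<in> children j" "d \<in> children j" "i \<noteq> d"
  shows "subtree_size i + subtree_size d + 1 \<le> subtree_size j"
proof -
  have "j < n" using assms(2) parent_less by (auto simp: children_def)
  have "j \<notin> descendants c" if "c \<in> children j" for c
    using on_parent_cycle_if_reaches_child[OF that] assms(1) by (auto simp: descendants_def)
  then have "card (insert j (descendants i \<union> descendants d)) = subtree_size i + subtree_size d + 1"
    using sibling_descendants_disjoint[OF assms] assms(2,3) finite_descendants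
    by (simp add: subtree_size_def card_Un_disjoint)
  moreover have "insert j (descendants i \<union> descendants d) \<subseteq> descendants j"
    using descendants_child assms(2,3) self_in_descendants[OF \<open>j < n\<close>] by blast
  ultimately show ?thesis
    unfolding subtree_size_def by (metis card_mono finite_descendants)
qed

lemma follower_chain_doubles:
  assumes "follows_parent i" "follows_parent (parent i)"
  shows "2 * (subtree_size i + 1) \<le> subtree_size (parent i) + 1"
proof -
  have i: "i \<in> children (parent i)" using assms(1) by (auto simp: follows_parent_def children_def)
  obtain d where d: "d \<in> children (parent i)" "d \<noteq> i" "subtree_size i \<le> subtree_size d"
    using larger_sibling[OF i] assms(1) by (auto simp: follows_parent_def)
  have "subtree_size i + subtree_size d + 1 \<le> subtree_size (parent i)"
    using sibling_subtree_sizes[OF follower_not_on_parent_cycle[OF assms(2)] i d(1)] d(2) by simp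
  then show ?thesis using d(3) by arith
qed

lemma follower_subtree_size: "follows_parent i \<Longrightarrow> subtree_size i + 1 \<le> n"
proof -
  assume i: "follows_parent i"
  then have p: "parent i < n" using parent_less by (auto simp: follows_parent_def)
  have "parent i \<notin> descendants i"
    using follower_not_on_parent_cycle[OF i] by (auto simp: descendants_def on_parent_cycle_def)
  then have "descendants i \<subseteq> {..<n} - {parent i}" using descendants_subset by blast
  then have "subtree_size i \<le> card ({..<n} - {parent i})"
    unfolding subtree_size_def by (intro card_mono) auto
  also have "\<dots> = n - 1" using p by simp
  finally have "subtree_size i \<le> n - 1" .
  then show ?thesis using p by linarith
qed

lemma settling_time:
  "i < n \<Longrightarrow> \<exists>T\<ge>2. settled i T \<and> 2 ^ (T - 2) * (subtree_size i + 1) \<le> 2 * n"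
proof (induction "n - subtree_size i" arbitrary: i rule: less_induct)
  case less
  consider "\<not> follows_parent i" | "follows_parent i" "\<not> follows_parent (parent i)"
    | "follows_parent i" "follows_parent (parent i)" by blast
  then show ?case
  proof cases
    case 1
    then show ?thesis
      using settled_2_unless_follows_parent[OF less.prems] subtree_size_le[of i] less.prems
      by (intro exI[of _ 2]) simp
  next
    case 2
    then have "settled (parent i) 2"
      using settled_2_unless_follows_parent parent_less by (auto simp: follows_parent_def)
    then have "settled i 3"
      using settled_after_parent[of i 1] 2(1) by (simp add: follows_parent_def numeral_3_eq_3 numeral_2_eq_2)
    then show ?thesis using follower_subtree_size[OF 2(1)] by (intro exI[of _ 3]) simp
  next
    case 3
    let ?p = "parent i"
    have doubles: "2 * (subtree_size i + 1) \<le> subtree_size ?p + 1"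
      using follower_chain_doubles[OF 3] .
    have "n - subtree_size ?p < n - subtree_size i" "?p < n"
      using doubles subtree_size_le[of ?p] 3(2) by (auto simp: follows_parent_def)
    then obtain T where T: "T \<ge> 2" "settled ?p T" "2 ^ (T - 2) * (subtree_size ?p + 1) \<le> 2 * n"
      using less.hyps by blast
    have "settled i (Suc T)"
      using settled_after_parent[of i "T - 1"] T(1,2) 3(1) by (simp add: follows_parent_def)
    moreover have "2 ^ (Suc T - 2) * (subtree_size i + 1) \<le> 2 * n"
    proof -
      have "Suc T - 2 = Suc (T - 2)" using T(1) by simp
      then have "2 ^ (Suc T - 2) * (subtree_size i + 1) = 2 ^ (T - 2) * (2 * (subtree_size i + 1))"
        by (simp only: power_Suc mult_ac)
      also have "\<dots> \<le> 2 ^ (T - 2) * (subtree_size ?p + 1)" using doubles by (rule mult_le_mono2)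
      finally show ?thesis using T(3) by simp
    qed
    ultimately show ?thesis using T(1) by (intro exI[of _ "Suc T"]) simp
  qed
qed

lemma settled_within_log:
  assumes "i < n"
  shows "settled i (nat \<lfloor>log 2 (real n)\<rfloor> + 2)"
proof -
  obtain T where T: "T \<ge> 2" "settled i T" "2 ^ (T - 2) * (subtree_size i + 1) \<le> 2 * n"
    using settling_time[OF assms] by blast
  have "2 ^ (T - 2) * 2 \<le> 2 ^ (T - 2) * (subtree_size i + 1)"
    using subtree_size_pos[OF assms] by simp
  then have "2 ^ (T - 2) \<le> n" using T(3) by linarith
  then have "real (T - 2) \<le> log 2 (real n)" by (rule le_log2_of_power)
  then have "T - 2 \<le> nat \<lfloor>log 2 (real n)\<rfloor>" by (simp add: le_nat_iff le_floor_iff)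
  then show ?thesis using T(1,2) settled_mono by simp
qed

lemma F_const_iter: "const_iter 3 n F (nat \<lfloor>log 2 (real n)\<rfloor> + 2)"
proof -
  let ?K = "nat \<lfloor>log 2 (real n)\<rfloor> + 2"
  have "(F ^^ ?K) x i = (F ^^ ?K) (\<lambda>_. 0) i" for x i
  proof (cases "i < n")
    case False
    then show ?thesis by (simp add: F_outside)
  qed (use settled_within_log in \<open>auto simp: settled_def\<close>)
  then show ?thesis unfolding const_iter_def by blast
qed

end

theorem theorem1:
  fixes n :: nat and G :: sdigraph
  assumes "n \<ge> 1" and "sdigraph_on n G"
  shows "\<exists>f. is_fun_over 3 n f \<and> admits 3 n G f \<and> nilpotent 3 n f
             \<and> nil_class 3 n f \<le> nat \<lfloor>log 2 (real n)\<rfloor> + 2"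
proof -
  interpret nilpotent_realisation n G by unfold_locales (rule assms(2))
  have "is_fun_over 3 n F" using F_in_configs by (simp add: is_fun_over_def)
  moreover have "admits 3 n G F" using interaction_graph_F by (simp add: admits_def)
  moreover have "nilpotent 3 n F" using F_const_iter by (auto simp: nilpotent_def)
  moreover have "nil_class 3 n F \<le> nat \<lfloor>log 2 (real n)\<rfloor> + 2"
    unfolding nil_class_def using F_const_iter by (rule Least_le)
  ultimately show ?thesis by blast
qed

end
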